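(* The following two group presentations are minimal, in the sense that no relator can be removed without changing the group; equivalently, no relator lies in the normal closure, in the free group on the generators, of the remaining relators: (1) $\langle y_2,y_3 \mid [\,c,\ (y_2^ny_3^m)^{-1}c\,(y_2^ny_3^m)\,],\ n,m\in\mathbb{Z},\ (n,m)>(0,0)\rangle$, where $c=[y_2,y_3]$; (2) $\langle x_1,x_2,x_3 \mid x_1^2,\ x_2^2,\ x_3^2,\ [\,v,\ h_{n,m}^{-1}v\,h_{n,m}\,],\ n,m\in\mathbb{Z},\ (n,m)>(0,0)\rangle$, where $v=[x_2x_1,x_1x_3]$ and $h_{n,m}=(x_2x_1)^n(x_1x_3)^m$.
   Context: Commutators are $[a,b]=aba^{-1}b^{-1}$. The order on pairs is lexicographic: $(n,m)>(0,0)$ means $n>0$, or $n=0$ and $m>0$. (These are presentations of the rotation subgroup and of the triangle group of a generic Euclidean triangle, respectively; the first presents the free metabelian group of rank 2.) *)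

theory Defs
  imports "HOL-Algebra.Algebra"
begin

text \<open>Free groups, built from reduced words.  A letter is a pair (a, b):
  b = False means the generator a, b = True means its inverse.\<close>

type_synonym 'a fword = "('a \<times> bool) list"

fun fw_reduce :: "'a fword \<Rightarrow> 'a fword" where
  "fw_reduce [] = []"
| "fw_reduce (x # xs) =
     (case fw_reduce xs of
        [] \<Rightarrow> [x]
      | y # ys \<Rightarrow> (if fst x = fst y \<and> snd x \<noteq> snd y then ys else x # y # ys))"

definition fw_inv :: "'a fword \<Rightarrow> 'a fword" where
  "fw_inv w = rev (map (\<lambda>(a, b). (a, \<not> b)) w)"

definition free_group :: "'a set \<Rightarrow> 'a fword monoid" where
  "free_group S = \<lparr> carrier = {w. fw_reduce w = w \<and> fst ` set w \<subseteq> S},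
                    monoid.mult = (\<lambda>u v. fw_reduce (u @ v)),
                    one = [] \<rparr>"

definition fgen :: "'a \<Rightarrow> 'a fword" where
  "fgen a = [(a, False)]"

definition commutator :: "('g, 'b) monoid_scheme \<Rightarrow> 'g \<Rightarrow> 'g \<Rightarrow> 'g" where
  "commutator G a b = a \<otimes>\<^bsub>G\<^esub> b \<otimes>\<^bsub>G\<^esub> inv\<^bsub>G\<^esub> a \<otimes>\<^bsub>G\<^esub> inv\<^bsub>G\<^esub> b"

definition normal_closure :: "('g, 'b) monoid_scheme \<Rightarrow> 'g set \<Rightarrow> 'g set" where
  "normal_closure G A =
     generate G (\<Union>g\<in>carrier G. (\<lambda>a. g \<otimes>\<^bsub>G\<^esub> a \<otimes>\<^bsub>G\<^esub> inv\<^bsub>G\<^esub> g) ` A)"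

definition minimal_relators :: "('g, 'b) monoid_scheme \<Rightarrow> 'i set \<Rightarrow> ('i \<Rightarrow> 'g) \<Rightarrow> bool" where
  "minimal_relators G I R \<longleftrightarrow>
     (\<forall>i\<in>I. R i \<notin> normal_closure G (R ` (I - {i})))"

definition pos_pairs :: "(int \<times> int) set" where
  "pos_pairs = {(n, m). n > 0 \<or> (n = 0 \<and> m > 0)}"

definition rel1 :: "int \<times> int \<Rightarrow> nat fword" where
  "rel1 p = (let G = free_group {2, 3}; y2 = fgen 2; y3 = fgen 3;
                 c = commutator G y2 y3;
                 g = y2 [^]\<^bsub>G\<^esub> fst p \<otimes>\<^bsub>G\<^esub> y3 [^]\<^bsub>G\<^esub> snd p
             in commutator G c (inv\<^bsub>G\<^esub> g \<otimes>\<^bsub>G\<^esub> c \<otimes>\<^bsub>G\<^esub> g))"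

definition rel2 :: "nat + (int \<times> int) \<Rightarrow> nat fword" where
  "rel2 i = (let G = free_group {1, 2, 3}; x1 = fgen 1; x2 = fgen 2; x3 = fgen 3;
                 a = x2 \<otimes>\<^bsub>G\<^esub> x1; b = x1 \<otimes>\<^bsub>G\<^esub> x3;
                 v = commutator G a b
             in case i of
                  Inl k \<Rightarrow> fgen k \<otimes>\<^bsub>G\<^esub> fgen k
                | Inr (n, m) \<Rightarrow>
                    (let h = a [^]\<^bsub>G\<^esub> n \<otimes>\<^bsub>G\<^esub> b [^]\<^bsub>G\<^esub> m
                     in commutator G v (inv\<^bsub>G\<^esub> h \<otimes>\<^bsub>G\<^esub> v \<otimes>\<^bsub>G\<^esub> h)))"

definition rel2_index :: "(nat + (int \<times> int)) set" where
  "rel2_index = Inl ` {1, 2, 3} \<union> Inr ` pos_pairs"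

end

theory Submission
  imports Defs "HOL-Library.Product_Plus"
begin

(*
  For each relator we build a homomorphism from the free group that kills every other relator
  but not this one; a relator outside the kernel cannot lie in the normal closure of relators
  inside it.

  For the commutator relators indexed by h the target is a group K_h, a central extension by Z
  of the wreath product Z wr (Z^2 x| {1, -1}) with cocycle
  omega_h(alpha, beta) = sum alpha(x) beta(y) k_h(y - x), where k_h(u) = A(u - h) - A(u + h) and
  A(a, b) = |a| |b|.  Send y2, y3 to a = ((1, 0), 1, delta_(0,0) - delta_(1,0), 0) and
  b = ((0, 1), 1, 0, 0).  Then c = [a, b] is the quadrupole
  gamma = delta_(0,0) - delta_(1,0) - delta_(0,1) + delta_(1,1), conjugation by a^n b^m translates
  gamma by -(n, m), and the relator becomes the central element 2 omega_h(gamma, gamma(. + (n, m))).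
  The mixed second difference of A is the product of the second differences of |.|, which vanish
  away from 0, so this element is 8 ([(n, m) = -h] - [(n, m) = h]): for positive pairs it is
  nontrivial exactly when (n, m) = h.

  For presentation (2), x1, x2, x3 go to involutions of K_h with x2 x1 |-> a and x1 x3 |-> b.
  The square x_k^2 is separated by the map to Z sending x_k to 1 and the other generators to 0,
  which kills all commutators.
*)

section \<open>Free groups\<close>

definition inv_letter :: "'a \<times> bool \<Rightarrow> 'a \<times> bool" where
  "inv_letter x = (fst x, \<not> snd x)"

lemma inv_letter_inv_letter [simp]: "inv_letter (inv_letter x) = x"
  by (simp add: inv_letter_def)

lemma eq_inv_letter_iff: "y = inv_letter x \<longleftrightarrow> fst x = fst y \<and> snd x \<noteq> snd y"
  by (cases x; cases y) (auto simp: inv_letter_def)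

fun reduced :: "'a fword \<Rightarrow> bool" where
  "reduced (x # y # w) \<longleftrightarrow> y \<noteq> inv_letter x \<and> reduced (y # w)"
| "reduced _ \<longleftrightarrow> True"

definition cons_reduced :: "'a \<times> bool \<Rightarrow> 'a fword \<Rightarrow> 'a fword" where
  "cons_reduced x w = (case w of [] \<Rightarrow> [x] | y # w' \<Rightarrow> if y = inv_letter x then w' else x # w)"

lemma fw_reduce_Cons: "fw_reduce (x # w) = cons_reduced x (fw_reduce w)"
  by (simp add: cons_reduced_def eq_inv_letter_iff split: list.split)

declare fw_reduce.simps(2) [simp del]

lemma reduced_ConsD: "reduced (x # w) \<Longrightarrow> reduced w"
  by (cases w) auto

lemma reduced_cons_reduced: "reduced w \<Longrightarrow> reduced (cons_reduced x w)"
  by (cases w) (auto simp: cons_reduced_def dest: reduced_ConsD)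

lemma reduced_fw_reduce: "reduced (fw_reduce w)"
  by (induction w) (simp_all add: fw_reduce_Cons reduced_cons_reduced)

lemma fw_reduce_reduced: "reduced w \<Longrightarrow> fw_reduce w = w"
proof (induction w)
  case (Cons x w)
  then have "fw_reduce w = w"
    using reduced_ConsD by blast
  with Cons.prems show ?case
    by (cases w) (auto simp: fw_reduce_Cons cons_reduced_def)
qed simp

lemma fw_reduce_fw_reduce [simp]: "fw_reduce (fw_reduce w) = fw_reduce w"
  by (simp add: fw_reduce_reduced reduced_fw_reduce)

lemma fw_reduce_append: "fw_reduce (u @ v) = foldr cons_reduced u (fw_reduce v)"
  by (induction u) (simp_all add: fw_reduce_Cons)

lemma cons_reduced_cancel: "reduced w \<Longrightarrow> cons_reduced x (cons_reduced (inv_letter x) w) = w"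
  by (cases w rule: reduced.cases) (auto simp: cons_reduced_def)

lemma foldr_cons_reduced_cons_reduced:
  assumes "reduced w"
  shows "foldr cons_reduced (cons_reduced x u) w = cons_reduced x (foldr cons_reduced u w)"
proof (cases u)
  case (Cons y u')
  show ?thesis
  proof (cases "y = inv_letter x")
    case True
    then have "cons_reduced x u = u'"
      using Cons by (simp add: cons_reduced_def)
    moreover have "reduced (foldr cons_reduced u' w)"
      using assms by (induction u') (simp_all add: reduced_cons_reduced)
    ultimately show ?thesis
      using Cons True by (simp add: cons_reduced_cancel)
  qed (simp add: Cons cons_reduced_def)
qed (simp add: cons_reduced_def)

lemma foldr_cons_reduced_fw_reduce:
  "reduced w \<Longrightarrow> foldr cons_reduced (fw_reduce u) w = foldr cons_reduced u w"
  by (induction u) (simp_all add: fw_reduce_Cons foldr_cons_reduced_cons_reduced)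

lemma fw_reduce_fw_reduce_append: "fw_reduce (fw_reduce u @ v) = fw_reduce (u @ v)"
  by (simp add: fw_reduce_append foldr_cons_reduced_fw_reduce reduced_fw_reduce)

lemma fw_reduce_append_fw_reduce: "fw_reduce (u @ fw_reduce v) = fw_reduce (u @ v)"
  by (simp add: fw_reduce_append)

lemma set_fw_reduce: "set (fw_reduce w) \<subseteq> set w"
proof (induction w)
  case (Cons x w)
  have "set (cons_reduced x v) \<subseteq> insert x (set v)" for v
    by (cases v) (auto simp: cons_reduced_def)
  with Cons show ?case
    by (fastforce simp: fw_reduce_Cons)
qed simp

lemma fw_inv_Cons: "fw_inv (x # w) = fw_inv w @ [inv_letter x]"
  by (cases x) (simp add: fw_inv_def inv_letter_def)

lemma fw_reduce_fw_inv_append: "fw_reduce (fw_inv w @ w) = []"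
proof (induction w)
  case (Cons x w)
  have "fw_reduce (fw_inv (x # w) @ x # w)
      = foldr cons_reduced (fw_inv w) (cons_reduced (inv_letter x) (cons_reduced x (fw_reduce w)))"
    by (simp add: fw_inv_Cons fw_reduce_append fw_reduce_Cons)
  also have "\<dots> = fw_reduce (fw_inv w @ w)"
    using cons_reduced_cancel[OF reduced_fw_reduce, of "inv_letter x"]
    by (simp add: fw_reduce_append)
  finally show ?case
    using Cons.IH by simp
qed (simp add: fw_inv_def)

lemma fst_set_fw_inv: "fst ` set (fw_inv w) = fst ` set w"
  by (force simp: fw_inv_def image_iff)

lemma group_free_group: "group (free_group S)"
proof (rule groupI)
  fix u v
  assume "u \<in> carrier (free_group S)" "v \<in> carrier (free_group S)"
  then show "u \<otimes>\<^bsub>free_group S\<^esub> v \<in> carrier (free_group S)"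
    using set_fw_reduce[of "u @ v"] by (fastforce simp: free_group_def)
next
  fix u
  assume u: "u \<in> carrier (free_group S)"
  show "\<exists>v\<in>carrier (free_group S). v \<otimes>\<^bsub>free_group S\<^esub> u = \<one>\<^bsub>free_group S\<^esub>"
  proof
    show "fw_reduce (fw_inv u) \<otimes>\<^bsub>free_group S\<^esub> u = \<one>\<^bsub>free_group S\<^esub>"
      by (simp add: free_group_def fw_reduce_fw_reduce_append fw_reduce_fw_inv_append)
    show "fw_reduce (fw_inv u) \<in> carrier (free_group S)"
      using u set_fw_reduce[of "fw_inv u"] fst_set_fw_inv[of u] by (auto simp: free_group_def)
  qed
qed (simp_all add: free_group_def fw_reduce_fw_reduce_append fw_reduce_append_fw_reduce)

lemma fgen_closed: "a \<in> S \<Longrightarrow> fgen a \<in> carrier (free_group S)"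
  by (simp add: free_group_def fgen_def fw_reduce_Cons cons_reduced_def)

definition letter_val :: "('g, 'b) monoid_scheme \<Rightarrow> ('a \<Rightarrow> 'g) \<Rightarrow> 'a \<times> bool \<Rightarrow> 'g" where
  "letter_val G f x = (if snd x then inv\<^bsub>G\<^esub> f (fst x) else f (fst x))"

definition free_group_lift :: "('g, 'b) monoid_scheme \<Rightarrow> ('a \<Rightarrow> 'g) \<Rightarrow> 'a fword \<Rightarrow> 'g" where
  "free_group_lift G f w = foldr (\<lambda>x g. letter_val G f x \<otimes>\<^bsub>G\<^esub> g) w \<one>\<^bsub>G\<^esub>"

lemma free_group_lift_Nil [simp]: "free_group_lift G f [] = \<one>\<^bsub>G\<^esub>"
  by (simp add: free_group_lift_def)

lemma free_group_lift_Cons [simp]: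
  "free_group_lift G f (x # w) = letter_val G f x \<otimes>\<^bsub>G\<^esub> free_group_lift G f w"
  by (simp add: free_group_lift_def)

context group
begin

lemma letter_val_closed: "f ` S \<subseteq> carrier G \<Longrightarrow> fst x \<in> S \<Longrightarrow> letter_val G f x \<in> carrier G"
  by (auto simp: letter_val_def)

lemma free_group_lift_closed:
  "f ` S \<subseteq> carrier G \<Longrightarrow> fst ` set w \<subseteq> S \<Longrightarrow> free_group_lift G f w \<in> carrier G"
  by (induction w) (simp_all add: letter_val_closed)

lemma free_group_lift_cons_reduced:
  assumes f: "f ` S \<subseteq> carrier G" and "fst x \<in> S" "fst ` set w \<subseteq> S"
  shows "free_group_lift G f (cons_reduced x w) = letter_val G f x \<otimes> free_group_lift G f w"
proof (cases w)
  case (Cons y w')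
  with assms have closed: "letter_val G f x \<in> carrier G" "letter_val G f y \<in> carrier G"
      "free_group_lift G f w' \<in> carrier G"
    by (auto intro: letter_val_closed free_group_lift_closed)
  show ?thesis
  proof (cases "y = inv_letter x")
    case True
    then have "letter_val G f x \<otimes> letter_val G f y = \<one>"
      using closed by (auto simp: letter_val_def inv_letter_def)
    with True Cons closed show ?thesis
      by (simp add: cons_reduced_def flip: m_assoc)
  qed (simp add: Cons cons_reduced_def)
qed (simp add: cons_reduced_def)

lemma free_group_lift_fw_reduce:
  "f ` S \<subseteq> carrier G \<Longrightarrow> fst ` set w \<subseteq> S \<Longrightarrow> free_group_lift G f (fw_reduce w) = free_group_lift G f w"
proof (induction w)
  case (Cons x w)
  then have "fst ` set (fw_reduce w) \<subseteq> S"
    using set_fw_reduce by fastforce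
  with Cons show ?case
    by (simp add: fw_reduce_Cons free_group_lift_cons_reduced)
qed simp

lemma free_group_lift_append:
  "f ` S \<subseteq> carrier G \<Longrightarrow> fst ` set u \<subseteq> S \<Longrightarrow> fst ` set v \<subseteq> S
    \<Longrightarrow> free_group_lift G f (u @ v) = free_group_lift G f u \<otimes> free_group_lift G f v"
  by (induction u) (simp_all add: m_assoc letter_val_closed free_group_lift_closed)

lemma group_hom_free_group_lift:
  assumes f: "f ` S \<subseteq> carrier G"
  shows "group_hom (free_group S) G (free_group_lift G f)"
proof -
  have "free_group_lift G f \<in> hom (free_group S) G"
  proof (rule homI)
    fix u v
    assume "u \<in> carrier (free_group S)" "v \<in> carrier (free_group S)"
    then have "fst ` set u \<subseteq> S" "fst ` set v \<subseteq> S" "fst ` set (u @ v) \<subseteq> S"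
      by (auto simp: free_group_def)
    with f show "free_group_lift G f (u \<otimes>\<^bsub>free_group S\<^esub> v) = free_group_lift G f u \<otimes> free_group_lift G f v"
      by (simp add: free_group_def free_group_lift_fw_reduce free_group_lift_append)
  qed (use f in \<open>auto simp: free_group_def intro: free_group_lift_closed\<close>)
  then show ?thesis
    by (simp add: group_hom_def group_hom_axioms_def group_free_group is_group)
qed

lemma free_group_lift_fgen: "f ` S \<subseteq> carrier G \<Longrightarrow> a \<in> S \<Longrightarrow> free_group_lift G f (fgen a) = f a"
  by (auto simp: fgen_def letter_val_def)

end

section \<open>Separating relators by homomorphisms\<close>

lemma normal_closure_subset_kernel:
  assumes \<phi>: "group_hom G H \<phi>" and A: "A \<subseteq> carrier G" and trivial: "\<And>a. a \<in> A \<Longrightarrow> \<phi> a = \<one>\<^bsub>H\<^esub>"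
  shows "normal_closure G A \<subseteq> kernel G H \<phi>"
proof -
  interpret group_hom G H \<phi>
    by (rule \<phi>)
  have "(\<Union>g\<in>carrier G. (\<lambda>a. g \<otimes>\<^bsub>G\<^esub> a \<otimes>\<^bsub>G\<^esub> inv\<^bsub>G\<^esub> g) ` A) \<subseteq> kernel G H \<phi>"
    using A trivial by (auto simp: kernel_def)
  then show ?thesis
    unfolding normal_closure_def by (rule G.generate_subgroup_incl[OF _ subgroup_kernel])
qed

lemma relator_not_in_normal_closure:
  assumes \<phi>: "group_hom G H \<phi>" and R: "R ` I \<subseteq> carrier G"
    and nontrivial: "\<phi> (R i) \<noteq> \<one>\<^bsub>H\<^esub>" and trivial: "\<And>j. j \<in> I \<Longrightarrow> j \<noteq> i \<Longrightarrow> \<phi> (R j) = \<one>\<^bsub>H\<^esub>"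
  shows "R i \<notin> normal_closure G (R ` (I - {i}))"
proof
  assume "R i \<in> normal_closure G (R ` (I - {i}))"
  also have "\<dots> \<subseteq> kernel G H \<phi>"
    using R trivial by (intro normal_closure_subset_kernel[OF \<phi>]) auto
  finally show False
    using nontrivial by (simp add: kernel_def)
qed

definition metab_relator :: "('g, 'b) monoid_scheme \<Rightarrow> 'g \<Rightarrow> 'g \<Rightarrow> int \<Rightarrow> int \<Rightarrow> 'g" where
  "metab_relator G y z n m =
     (let c = commutator G y z; g = y [^]\<^bsub>G\<^esub> n \<otimes>\<^bsub>G\<^esub> z [^]\<^bsub>G\<^esub> m
      in commutator G c (inv\<^bsub>G\<^esub> g \<otimes>\<^bsub>G\<^esub> c \<otimes>\<^bsub>G\<^esub> g))"

lemma (in group) metab_relator_closed: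
  "y \<in> carrier G \<Longrightarrow> z \<in> carrier G \<Longrightarrow> metab_relator G y z n m \<in> carrier G"
  by (simp add: metab_relator_def commutator_def Let_def)

lemma (in group_hom) metab_relator_hom:
  "y \<in> carrier G \<Longrightarrow> z \<in> carrier G \<Longrightarrow> h (metab_relator G y z n m) = metab_relator H (h y) (h z) n m"
  by (simp add: metab_relator_def commutator_def hom_int_pow Let_def)

lemma (in comm_group) commutator_eq_one:
  "a \<in> carrier G \<Longrightarrow> b \<in> carrier G \<Longrightarrow> commutator G a b = \<one>"
  by (simp add: commutator_def m_assoc m_lcomm[of b "inv a"])

lemma (in comm_group) metab_relator_eq_one:
  "y \<in> carrier G \<Longrightarrow> z \<in> carrier G \<Longrightarrow> metab_relator G y z n m = \<one>"
  by (simp add: metab_relator_def commutator_eq_one Let_def)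

section \<open>The groups \<open>K\<^sub>h\<close>\<close>

definition supp :: "('a \<Rightarrow> int) \<Rightarrow> 'a set" where
  "supp \<alpha> = {x. \<alpha> x \<noteq> 0}"

lemma supp_zero [simp]: "supp (\<lambda>_. 0) = {}"
  by (simp add: supp_def)

lemma supp_uminus [simp]: "supp (\<lambda>x. - \<alpha> x) = supp \<alpha>"
  by (simp add: supp_def)

lemma supp_add_subset: "supp (\<lambda>x. \<alpha> x + \<beta> x) \<subseteq> supp \<alpha> \<union> supp \<beta>"
  by (auto simp: supp_def)

lemma finite_supp_add:
  "finite (supp \<alpha>) \<Longrightarrow> finite (supp \<beta>) \<Longrightarrow> finite (supp (\<lambda>x. \<alpha> x + \<beta> x))"
  by (rule finite_subset[OF supp_add_subset]) simp

definition area :: "int \<times> int \<Rightarrow> int" where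
  "area u = \<bar>fst u\<bar> * \<bar>snd u\<bar>"

definition omega_kernel :: "int \<times> int \<Rightarrow> int \<times> int \<Rightarrow> int" where
  "omega_kernel h u = area (u - h) - area (u + h)"

lemma omega_kernel_uminus: "omega_kernel h (- u) = - omega_kernel h u"
proof -
  have "\<bar>- a - b\<bar> = \<bar>a + b\<bar>" "\<bar>b - a\<bar> = \<bar>a - b\<bar>" for a b :: int
    by arith+
  then show ?thesis
    by (simp add: omega_kernel_def area_def)
qed

definition omega :: "int \<times> int \<Rightarrow> (int \<times> int \<Rightarrow> int) \<Rightarrow> (int \<times> int \<Rightarrow> int) \<Rightarrow> int" where
  "omega h \<alpha> \<beta> = (\<Sum>x\<in>supp \<alpha>. \<Sum>y\<in>supp \<beta>. \<alpha> x * \<beta> y * omega_kernel h (y - x))"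

lemma omega_eq_sum:
  assumes "finite U" "supp \<alpha> \<subseteq> U" "finite V" "supp \<beta> \<subseteq> V"
  shows "omega h \<alpha> \<beta> = (\<Sum>x\<in>U. \<Sum>y\<in>V. \<alpha> x * \<beta> y * omega_kernel h (y - x))"
proof -
  have "omega h \<alpha> \<beta> = (\<Sum>x\<in>supp \<alpha>. \<Sum>y\<in>V. \<alpha> x * \<beta> y * omega_kernel h (y - x))"
    unfolding omega_def
    by (rule sum.cong[OF refl], rule sum.mono_neutral_left) (use assms in \<open>auto simp: supp_def\<close>)
  also have "\<dots> = (\<Sum>x\<in>U. \<Sum>y\<in>V. \<alpha> x * \<beta> y * omega_kernel h (y - x))"
    by (rule sum.mono_neutral_left) (use assms in \<open>auto simp: supp_def\<close>)
  finally show ?thesis .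
qed

lemma omega_zero_left [simp]: "omega h (\<lambda>_. 0) \<beta> = 0"
  and omega_zero_right [simp]: "omega h \<alpha> (\<lambda>_. 0) = 0"
  by (simp_all add: omega_def)

lemma omega_add_left:
  assumes "finite (supp \<alpha>)" "finite (supp \<alpha>')" "finite (supp \<beta>)"
  shows "omega h (\<lambda>x. \<alpha> x + \<alpha>' x) \<beta> = omega h \<alpha> \<beta> + omega h \<alpha>' \<beta>"
proof -
  let ?U = "supp \<alpha> \<union> supp \<alpha>'"
  from assms supp_add_subset[of \<alpha> \<alpha>'] show ?thesis
    by (simp add: omega_eq_sum[of ?U _ "supp \<beta>"] distrib_right sum.distrib)
qed

lemma omega_add_right:
  assumes "finite (supp \<alpha>)" "finite (supp \<beta>)" "finite (supp \<beta>')"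
  shows "omega h \<alpha> (\<lambda>x. \<beta> x + \<beta>' x) = omega h \<alpha> \<beta> + omega h \<alpha> \<beta>'"
proof -
  let ?V = "supp \<beta> \<union> supp \<beta>'"
  from assms supp_add_subset[of \<beta> \<beta>'] show ?thesis
    by (simp add: omega_eq_sum[of "supp \<alpha>" _ ?V] distrib_left distrib_right sum.distrib)
qed

lemma omega_uminus_left: "omega h (\<lambda>x. - \<alpha> x) \<beta> = - omega h \<alpha> \<beta>"
  and omega_uminus_right: "omega h \<alpha> (\<lambda>x. - \<beta> x) = - omega h \<alpha> \<beta>"
  by (simp_all add: omega_def sum_negf)

lemma omega_swap: "omega h \<beta> \<alpha> = - omega h \<alpha> \<beta>"
proof -
  have "omega h \<beta> \<alpha> = (\<Sum>x\<in>supp \<alpha>. \<Sum>y\<in>supp \<beta>. \<beta> y * \<alpha> x * omega_kernel h (x - y))"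
    unfolding omega_def by (rule sum.swap)
  also have "\<dots> = (\<Sum>x\<in>supp \<alpha>. \<Sum>y\<in>supp \<beta>. - (\<alpha> x * \<beta> y * omega_kernel h (y - x)))"
  proof (rule sum.cong[OF refl], rule sum.cong[OF refl])
    fix x y :: "int \<times> int"
    have "omega_kernel h (x - y) = - omega_kernel h (y - x)"
      using omega_kernel_uminus[of h "y - x"] by simp
    then show "\<beta> y * \<alpha> x * omega_kernel h (x - y) = - (\<alpha> x * \<beta> y * omega_kernel h (y - x))"
      by simp
  qed
  finally show ?thesis
    by (simp add: omega_def sum_negf)
qed

lemma omega_self [simp]: "omega h \<alpha> \<alpha> = 0"
  using omega_swap[of h \<alpha> \<alpha>] by simp

definition scale :: "int \<Rightarrow> int \<times> int \<Rightarrow> int \<times> int" where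
  "scale e u = (e * fst u, e * snd u)"

lemma scale_1 [simp]: "scale 1 u = u"
  and scale_minus_1 [simp]: "scale (- 1) u = - u"
  by (simp_all add: scale_def prod_eq_iff)

lemma omega_kernel_scale: "e \<in> {1, -1} \<Longrightarrow> omega_kernel h (scale e u) = e * omega_kernel h u"
  by (auto simp: omega_kernel_uminus)

definition affine :: "int \<Rightarrow> int \<times> int \<Rightarrow> int \<times> int \<Rightarrow> int \<times> int" where
  "affine e v x = v + scale e x"

text \<open>For \<open>e = \<plusminus>1\<close>, \<open>transport e v \<alpha>\<close> is \<open>\<alpha> \<circ> (affine e v)\<inverse>\<close>.\<close>

definition transport :: "int \<Rightarrow> int \<times> int \<Rightarrow> (int \<times> int \<Rightarrow> int) \<Rightarrow> int \<times> int \<Rightarrow> int" where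
  "transport e v \<alpha> x = \<alpha> (scale e (x - v))"

lemma transport_affine: "e \<in> {1, -1} \<Longrightarrow> transport e v \<alpha> (affine e v x) = \<alpha> x"
  by (auto simp: transport_def affine_def)

lemma affine_surj: "e \<in> {1, -1} \<Longrightarrow> affine e v (scale e (x - v)) = x"
  by (auto simp: affine_def)

lemma affine_diff: "affine e v y - affine e v x = scale e (y - x)"
  by (simp add: affine_def scale_def algebra_simps)

lemma inj_affine: "e \<in> {1, -1} \<Longrightarrow> inj (affine e v)"
  by (auto intro!: injI simp: affine_def)

lemma supp_transport: "e \<in> {1, -1} \<Longrightarrow> supp (transport e v \<alpha>) = affine e v ` supp \<alpha>"
proof (intro equalityI subsetI)
  fix x
  assume "e \<in> {1, -1}" "x \<in> supp (transport e v \<alpha>)"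
  then show "x \<in> affine e v ` supp \<alpha>"
    by (intro image_eqI[of _ _ "scale e (x - v)"]) (auto simp: affine_surj supp_def transport_def)
qed (auto simp: supp_def transport_affine)

lemma finite_supp_transport: "e \<in> {1, -1} \<Longrightarrow> finite (supp \<alpha>) \<Longrightarrow> finite (supp (transport e v \<alpha>))"
  by (simp add: supp_transport)

lemma transport_1_0 [simp]: "transport 1 0 \<alpha> = \<alpha>"
  by (simp add: transport_def fun_eq_iff)

lemma transport_zero [simp]: "transport e v (\<lambda>_. 0) = (\<lambda>_. 0)"
  by (simp add: transport_def fun_eq_iff)

lemma transport_add: "transport e v (\<lambda>x. \<alpha> x + \<beta> x) = (\<lambda>x. transport e v \<alpha> x + transport e v \<beta> x)"
  by (simp add: transport_def fun_eq_iff)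

lemma transport_transport:
  assumes "e \<in> {1, -1}"
  shows "transport e v (transport e' v' \<alpha>) = transport (e * e') (affine e v v') \<alpha>"
proof -
  have "scale e' (scale e (x - v) - v') = scale (e * e') (x - affine e v v')" for x
    using assms by (auto simp: scale_def affine_def algebra_simps)
  then show ?thesis
    by (simp add: transport_def fun_eq_iff)
qed

lemma omega_transport:
  assumes e: "e \<in> {1, -1}"
  shows "omega h (transport e v \<alpha>) (transport e v \<beta>) = e * omega h \<alpha> \<beta>"
proof -
  have inj: "inj_on (affine e v) A" for A
    using inj_affine[OF e] by (rule inj_on_subset) simp
  have "omega h (transport e v \<alpha>) (transport e v \<beta>)
      = (\<Sum>x\<in>supp \<alpha>. \<Sum>y\<in>supp \<beta>. \<alpha> x * \<beta> y * omega_kernel h (affine e v y - affine e v x))"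
    using e by (simp add: omega_def supp_transport sum.reindex[OF inj] transport_affine)
  also have "\<dots> = (\<Sum>x\<in>supp \<alpha>. \<Sum>y\<in>supp \<beta>. e * (\<alpha> x * \<beta> y * omega_kernel h (y - x)))"
    using e by (simp only: affine_diff omega_kernel_scale mult.left_commute[of e])
  also have "\<dots> = e * omega h \<alpha> \<beta>"
    by (simp add: omega_def sum_distrib_left)
  finally show ?thesis .
qed

lemma sign_mult_closed: "e \<in> {1, -1} \<Longrightarrow> e' \<in> {1, -1} \<Longrightarrow> e * e' \<in> {1, -1 :: int}"
  by auto

text \<open>An element \<open>(v, e, \<alpha>, s)\<close> consists of the affine map \<open>x \<mapsto> v + e x\<close> of \<open>\<int>\<^sup>2\<close>,
  a finitely supported \<open>\<alpha> : \<int>\<^sup>2 \<rightarrow> \<int>\<close> and a central \<open>s \<in> \<int>\<close>. The product is that of the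
  wreath product, twisted in the central coordinate by \<open>omega h\<close>; it is associative because
  \<open>omega h\<close> is bilinear and invariant under the affine action up to the sign \<open>e\<close>.\<close>

type_synonym ext_elem = "(int \<times> int) \<times> int \<times> (int \<times> int \<Rightarrow> int) \<times> int"

definition wreath_ext :: "int \<times> int \<Rightarrow> ext_elem monoid" where
  "wreath_ext h =
     \<lparr>carrier = {(v, e, \<alpha>, s). e \<in> {1, -1} \<and> finite (supp \<alpha>)},
      monoid.mult = (\<lambda>(v, e, \<alpha>, s) (v', e', \<alpha>', s').
        (affine e v v', e * e', \<lambda>x. \<alpha> x + transport e v \<alpha>' x,
         s + e * s' + omega h \<alpha> (transport e v \<alpha>'))),
      one = (0, 1, \<lambda>_. 0, 0)\<rparr>"

lemma wreath_ext_carrier [simp]: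
  "(v, e, \<alpha>, s) \<in> carrier (wreath_ext h) \<longleftrightarrow> e \<in> {1, -1} \<and> finite (supp \<alpha>)"
  by (simp add: wreath_ext_def)

lemma wreath_ext_mult [simp]:
  "(v, e, \<alpha>, s) \<otimes>\<^bsub>wreath_ext h\<^esub> (v', e', \<alpha>', s') =
     (affine e v v', e * e', \<lambda>x. \<alpha> x + transport e v \<alpha>' x, s + e * s' + omega h \<alpha> (transport e v \<alpha>'))"
  by (simp add: wreath_ext_def)

lemma wreath_ext_one: "\<one>\<^bsub>wreath_ext h\<^esub> = (0, 1, \<lambda>_. 0, 0)"
  by (simp add: wreath_ext_def)

lemma wreath_ext_assoc:
  assumes "e1 \<in> {1, -1}" "e2 \<in> {1, -1}" "finite (supp \<alpha>1)" "finite (supp \<alpha>2)" "finite (supp \<alpha>3)"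
  shows "(v1, e1, \<alpha>1, s1) \<otimes>\<^bsub>wreath_ext h\<^esub> (v2, e2, \<alpha>2, s2) \<otimes>\<^bsub>wreath_ext h\<^esub> (v3, e3, \<alpha>3, s3)
       = (v1, e1, \<alpha>1, s1) \<otimes>\<^bsub>wreath_ext h\<^esub> ((v2, e2, \<alpha>2, s2) \<otimes>\<^bsub>wreath_ext h\<^esub> (v3, e3, \<alpha>3, s3))"
proof -
  let ?\<beta> = "transport e1 v1 (transport e2 v2 \<alpha>3)"
  have fin: "finite (supp (transport e1 v1 \<alpha>2))" "finite (supp (transport e2 v2 \<alpha>3))" "finite (supp ?\<beta>)"
    using assms by (simp_all add: finite_supp_transport)
  have affine: "affine e1 v1 (affine e2 v2 v3) = affine (e1 * e2) (affine e1 v1 v2) v3"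
    by (simp add: affine_def scale_def algebra_simps)
  have transport: "transport (e1 * e2) (affine e1 v1 v2) \<alpha>3 = ?\<beta>"
    using assms(1) by (simp add: transport_transport)
  have omega_left: "omega h (\<lambda>x. \<alpha>1 x + transport e1 v1 \<alpha>2 x) ?\<beta>
      = omega h \<alpha>1 ?\<beta> + e1 * omega h \<alpha>2 (transport e2 v2 \<alpha>3)"
    using assms fin by (simp add: omega_add_left omega_transport)
  have omega_right: "omega h \<alpha>1 (\<lambda>x. transport e1 v1 \<alpha>2 x + ?\<beta> x)
      = omega h \<alpha>1 (transport e1 v1 \<alpha>2) + omega h \<alpha>1 ?\<beta>"
    using assms fin by (simp add: omega_add_right)
  show ?thesis
    by (simp add: affine transport omega_left omega_right transport_add algebra_simps)
qed

lemma wreath_ext_mult_closed: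
  assumes "x \<in> carrier (wreath_ext h)" "y \<in> carrier (wreath_ext h)"
  shows "x \<otimes>\<^bsub>wreath_ext h\<^esub> y \<in> carrier (wreath_ext h)"
proof -
  obtain v e \<alpha> s v' e' \<alpha>' s' where xy: "x = (v, e, \<alpha>, s)" "y = (v', e', \<alpha>', s')"
    by (cases x; cases y)
  with assms have sign: "e \<in> {1, -1}" "e' \<in> {1, -1}" and fin: "finite (supp \<alpha>)" "finite (supp \<alpha>')"
    by simp_all
  from sign have "e * e' \<in> {1, -1}"
    by (rule sign_mult_closed)
  with sign fin show ?thesis
    by (simp add: xy finite_supp_add finite_supp_transport)
qed

lemma wreath_ext_inv_mult:
  assumes "e \<in> {1, -1}"
  shows "(- scale e v, e, \<lambda>x. - transport e (- scale e v) \<alpha> x, - e * s) \<otimes>\<^bsub>wreath_ext h\<^esub> (v, e, \<alpha>, s)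
    = \<one>\<^bsub>wreath_ext h\<^esub>"
proof -
  have "e * e = 1"
    using assms by auto
  then show ?thesis
    by (simp add: wreath_ext_one affine_def omega_uminus_left)
qed

lemma group_wreath_ext: "group (wreath_ext h)"
proof (rule groupI)
  fix x y
  assume "x \<in> carrier (wreath_ext h)" "y \<in> carrier (wreath_ext h)"
  then show "x \<otimes>\<^bsub>wreath_ext h\<^esub> y \<in> carrier (wreath_ext h)"
    by (rule wreath_ext_mult_closed)
next
  show "\<one>\<^bsub>wreath_ext h\<^esub> \<in> carrier (wreath_ext h)"
    by (simp add: wreath_ext_one)
next
  fix x y z
  assume xyz: "x \<in> carrier (wreath_ext h)" "y \<in> carrier (wreath_ext h)" "z \<in> carrier (wreath_ext h)"
  obtain v1 e1 \<alpha>1 s1 v2 e2 \<alpha>2 s2 v3 e3 \<alpha>3 s3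
    where eq: "x = (v1, e1, \<alpha>1, s1)" "y = (v2, e2, \<alpha>2, s2)" "z = (v3, e3, \<alpha>3, s3)"
    by (cases x; cases y; cases z)
  from xyz have "e1 \<in> {1, -1}" "e2 \<in> {1, -1}" "finite (supp \<alpha>1)" "finite (supp \<alpha>2)" "finite (supp \<alpha>3)"
    unfolding eq by simp_all
  then show "x \<otimes>\<^bsub>wreath_ext h\<^esub> y \<otimes>\<^bsub>wreath_ext h\<^esub> z = x \<otimes>\<^bsub>wreath_ext h\<^esub> (y \<otimes>\<^bsub>wreath_ext h\<^esub> z)"
    unfolding eq by (rule wreath_ext_assoc)
next
  fix x
  assume "x \<in> carrier (wreath_ext h)"
  then show "\<one>\<^bsub>wreath_ext h\<^esub> \<otimes>\<^bsub>wreath_ext h\<^esub> x = x"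
    by (cases x) (simp add: wreath_ext_one affine_def)
next
  fix x
  assume x: "x \<in> carrier (wreath_ext h)"
  obtain v e \<alpha> s where x_eq: "x = (v, e, \<alpha>, s)"
    by (cases x)
  with x have "e \<in> {1, -1}" "finite (supp \<alpha>)"
    by simp_all
  then have "(- scale e v, e, \<lambda>x. - transport e (- scale e v) \<alpha> x, - e * s) \<in> carrier (wreath_ext h)"
    by (simp add: finite_supp_transport)
  with \<open>e \<in> {1, -1}\<close> show "\<exists>y\<in>carrier (wreath_ext h). y \<otimes>\<^bsub>wreath_ext h\<^esub> x = \<one>\<^bsub>wreath_ext h\<^esub>"
    unfolding x_eq by (blast intro: wreath_ext_inv_mult)
qed

lemma wreath_ext_inv [simp]:
  assumes "e \<in> {1, -1}" "finite (supp \<alpha>)"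
  shows "inv\<^bsub>wreath_ext h\<^esub> (v, e, \<alpha>, s) = (- scale e v, e, \<lambda>x. - transport e (- scale e v) \<alpha> x, - e * s)"
  using assms
  by (intro group.inv_equality[OF group_wreath_ext] wreath_ext_inv_mult) (simp_all add: finite_supp_transport)

lemma commutator_wreath_ext_pure:
  assumes "finite (supp \<alpha>)" "finite (supp \<beta>)"
  shows "commutator (wreath_ext h) (0, 1, \<alpha>, s) (0, 1, \<beta>, t) = (0, 1, \<lambda>_. 0, 2 * omega h \<alpha> \<beta>)"
proof -
  have "omega h (\<lambda>x. \<alpha> x + \<beta> x) (\<lambda>x. - \<alpha> x) = omega h \<alpha> \<beta>"
    using assms by (simp add: omega_add_left omega_uminus_right omega_swap[of h \<beta>])
  with assms show ?thesis
    by (simp add: commutator_def affine_def omega_uminus_right)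
qed

lemma conj_pure_wreath_ext:
  assumes "g \<in> carrier (wreath_ext h)" "fst (snd g) = 1"
  shows "\<exists>s'. inv\<^bsub>wreath_ext h\<^esub> g \<otimes>\<^bsub>wreath_ext h\<^esub> (0, 1, \<gamma>, s) \<otimes>\<^bsub>wreath_ext h\<^esub> g
               = (0, 1, \<lambda>x. \<gamma> (x + fst g), s')"
  using assms by (cases g) (simp add: affine_def transport_def)

definition affine_part :: "ext_elem \<Rightarrow> ext_elem" where
  "affine_part x = (fst x, fst (snd x), \<lambda>_. 0, 0)"

lemma affine_part_hom: "affine_part \<in> hom (wreath_ext h) (wreath_ext h)"
proof (rule homI)
  fix x
  assume "x \<in> carrier (wreath_ext h)"
  then show "affine_part x \<in> carrier (wreath_ext h)"
    by (cases x) (simp add: affine_part_def)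
next
  fix x y
  show "affine_part (x \<otimes>\<^bsub>wreath_ext h\<^esub> y) = affine_part x \<otimes>\<^bsub>wreath_ext h\<^esub> affine_part y"
    by (cases x; cases y) (simp add: affine_part_def transport_def)
qed

definition translation :: "int \<times> int \<Rightarrow> ext_elem" where
  "translation u = (u, 1, \<lambda>_. 0, 0)"

lemma translation_mult [simp]:
  "translation u \<otimes>\<^bsub>wreath_ext h\<^esub> translation w = translation (u + w)"
  by (simp add: translation_def affine_def transport_def)

lemma translation_int_pow: "translation u [^]\<^bsub>wreath_ext h\<^esub> (n::int) = translation (scale n u)"
proof -
  have "(\<lambda>k. translation (scale k u)) \<in> hom integer_group (wreath_ext h)"
    by (rule homI) (auto simp: translation_def scale_def affine_def transport_def algebra_simps)
  then have "translation (scale (1 [^]\<^bsub>integer_group\<^esub> n) u) = translation (scale 1 u) [^]\<^bsub>wreath_ext h\<^esub> n"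
    by (rule hom_int_pow) (simp_all add: group_wreath_ext)
  then show ?thesis
    by simp
qed

section \<open>The relators in \<open>K\<^sub>h\<close>\<close>

definition dipole :: "int \<times> int \<Rightarrow> int" where
  "dipole x = (if x = (0, 0) then 1 else if x = (1, 0) then -1 else 0)"

definition quadrupole :: "int \<times> int \<Rightarrow> int" where
  "quadrupole x = dipole x - dipole (x - (0, 1))"

definition unit_square :: "(int \<times> int) set" where
  "unit_square = {(0, 0), (1, 0), (0, 1), (1, 1)}"

lemma finite_supp_dipole [simp]: "finite (supp dipole)"
  by (rule finite_subset[of _ "{(0, 0), (1, 0)}"]) (auto simp: supp_def dipole_def split: if_splits)

lemma supp_quadrupole_shift: "supp (\<lambda>x. quadrupole (x + u)) \<subseteq> (\<lambda>y. y - u) ` unit_square"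
proof
  fix x
  assume "x \<in> supp (\<lambda>x. quadrupole (x + u))"
  then have "x + u \<in> unit_square"
    by (cases "x + u") (auto simp: supp_def quadrupole_def dipole_def unit_square_def split: if_splits)
  then show "x \<in> (\<lambda>y. y - u) ` unit_square"
    by (rule rev_image_eqI) simp
qed

lemma finite_supp_quadrupole_shift: "finite (supp (\<lambda>x. quadrupole (x + u)))"
  by (rule finite_subset[OF supp_quadrupole_shift]) (simp add: unit_square_def)

definition second_diff :: "(int \<Rightarrow> int) \<Rightarrow> int \<Rightarrow> int" where
  "second_diff f a = 2 * f a - f (a + 1) - f (a - 1)"

lemma second_diff_abs: "second_diff abs a = (if a = 0 then -2 else 0)"
  unfolding second_diff_def by arith

text \<open>On the unit square \<open>quadrupole (i, j) = (-1)\<^sup>i\<^sup>+\<^sup>j\<close>, so the double sum factors into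
  second differences in each coordinate.\<close>

lemma quadrupole_sum_product:
  "(\<Sum>x\<in>unit_square. \<Sum>y\<in>unit_square. quadrupole x * quadrupole y * (f (fst y - fst x + a) * g (snd y - snd x + b)))
   = second_diff f a * second_diff g b"
  by (simp add: unit_square_def quadrupole_def dipole_def second_diff_def algebra_simps)

lemma quadrupole_kernel_sum:
  "(\<Sum>x\<in>unit_square. \<Sum>y\<in>unit_square. quadrupole x * quadrupole y * omega_kernel h (y - u - x))
   = second_diff abs (- fst u - fst h) * second_diff abs (- snd u - snd h)
     - second_diff abs (fst h - fst u) * second_diff abs (snd h - snd u)"
proof -
  have "omega_kernel h (y - u - x)
      = \<bar>fst y - fst x + (- fst u - fst h)\<bar> * \<bar>snd y - snd x + (- snd u - snd h)\<bar>
        - \<bar>fst y - fst x + (fst h - fst u)\<bar> * \<bar>snd y - snd x + (snd h - snd u)\<bar>" for x y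
    by (simp add: omega_kernel_def area_def algebra_simps)
  then show ?thesis
    by (simp add: right_diff_distrib sum_subtractf quadrupole_sum_product[of abs _ abs])
qed

lemma omega_quadrupole_shift:
  "omega h quadrupole (\<lambda>x. quadrupole (x + u)) = 4 * (of_bool (u = - h) - of_bool (u = h))"
proof -
  have inj: "inj_on (\<lambda>y. y - u) unit_square"
    by (simp add: inj_on_def)
  have "omega h quadrupole (\<lambda>x. quadrupole (x + u))
      = (\<Sum>x\<in>unit_square. \<Sum>y\<in>(\<lambda>y. y - u) ` unit_square. quadrupole x * quadrupole (y + u) * omega_kernel h (y - x))"
    using supp_quadrupole_shift[of 0] supp_quadrupole_shift[of u]
    by (intro omega_eq_sum) (simp_all add: unit_square_def)
  also have "\<dots> = (\<Sum>x\<in>unit_square. \<Sum>y\<in>unit_square. quadrupole x * quadrupole y * omega_kernel h (y - u - x))"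
    by (simp add: sum.reindex[OF inj])
  also have "\<dots> = 4 * (of_bool (u = - h) - of_bool (u = h))"
    unfolding quadrupole_kernel_sum second_diff_abs by (cases u; cases h) auto
  finally show ?thesis .
qed

definition ka :: ext_elem where
  "ka = ((1, 0), 1, dipole, 0)"

definition kb :: ext_elem where
  "kb = ((0, 1), 1, \<lambda>_. 0, 0)"

lemma ka_closed [simp]: "ka \<in> carrier (wreath_ext h)"
  and kb_closed [simp]: "kb \<in> carrier (wreath_ext h)"
  by (simp_all add: ka_def kb_def)

lemma commutator_ka_kb: "\<exists>s. commutator (wreath_ext h) ka kb = (0, 1, quadrupole, s)"
  by (simp add: commutator_def ka_def kb_def affine_def transport_def quadrupole_def fun_eq_iff zero_prod_def)

lemma affine_part_ka_int_pow_kb_int_pow: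
  "affine_part (ka [^]\<^bsub>wreath_ext h\<^esub> n \<otimes>\<^bsub>wreath_ext h\<^esub> kb [^]\<^bsub>wreath_ext h\<^esub> m) = translation (n, m)"
proof -
  interpret affine_part: group_hom "wreath_ext h" "wreath_ext h" affine_part
    by (simp add: group_hom_def group_hom_axioms_def group_wreath_ext affine_part_hom)
  have "affine_part ka = translation (1, 0)" "affine_part kb = translation (0, 1)"
    by (simp_all add: affine_part_def ka_def kb_def translation_def)
  then show ?thesis
    by (simp add: affine_part.hom_int_pow translation_int_pow scale_def)
qed

lemma metab_relator_ka_kb:
  "metab_relator (wreath_ext h) ka kb n m = (0, 1, \<lambda>_. 0, 8 * (of_bool ((n, m) = - h) - of_bool ((n, m) = h)))"
proof -
  interpret K: group "wreath_ext h"
    by (rule group_wreath_ext)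
  obtain s where c: "commutator (wreath_ext h) ka kb = (0, 1, quadrupole, s)"
    using commutator_ka_kb by blast
  define g where "g = ka [^]\<^bsub>wreath_ext h\<^esub> n \<otimes>\<^bsub>wreath_ext h\<^esub> kb [^]\<^bsub>wreath_ext h\<^esub> m"
  have "affine_part g = translation (n, m)"
    unfolding g_def by (rule affine_part_ka_int_pow_kb_int_pow)
  then have "fst g = (n, m)" "fst (snd g) = 1"
    by (simp_all add: affine_part_def translation_def)
  moreover have "g \<in> carrier (wreath_ext h)"
    by (simp add: g_def)
  ultimately obtain s' where conj:
    "inv\<^bsub>wreath_ext h\<^esub> g \<otimes>\<^bsub>wreath_ext h\<^esub> (0, 1, quadrupole, s) \<otimes>\<^bsub>wreath_ext h\<^esub> g
       = (0, 1, \<lambda>x. quadrupole (x + (n, m)), s')"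
    using conj_pure_wreath_ext by fastforce
  have "metab_relator (wreath_ext h) ka kb n m
      = commutator (wreath_ext h) (0, 1, quadrupole, s) (0, 1, \<lambda>x. quadrupole (x + (n, m)), s')"
    by (simp add: metab_relator_def c conj flip: g_def)
  also have "\<dots> = (0, 1, \<lambda>_. 0, 2 * omega h quadrupole (\<lambda>x. quadrupole (x + (n, m))))"
    using finite_supp_quadrupole_shift[of 0] finite_supp_quadrupole_shift[of "(n, m)"]
    by (simp add: commutator_wreath_ext_pure)
  finally show ?thesis
    by (simp add: omega_quadrupole_shift)
qed

lemma metab_relator_ka_kb_eq_one:
  assumes "(n, m) \<in> pos_pairs" "h \<in> pos_pairs"
  shows "metab_relator (wreath_ext h) ka kb n m = \<one>\<^bsub>wreath_ext h\<^esub> \<longleftrightarrow> (n, m) \<noteq> h"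
  using assms by (cases h) (auto simp: metab_relator_ka_kb wreath_ext_one pos_pairs_def)

definition kx1 :: ext_elem where
  "kx1 = (0, -1, \<lambda>_. 0, 0)"

definition kx2 :: ext_elem where
  "kx2 = ((1, 0), -1, dipole, 0)"

definition kx3 :: ext_elem where
  "kx3 = ((0, -1), -1, \<lambda>_. 0, 0)"

lemma kx1_closed [simp]: "kx1 \<in> carrier (wreath_ext h)"
  and kx2_closed [simp]: "kx2 \<in> carrier (wreath_ext h)"
  and kx3_closed [simp]: "kx3 \<in> carrier (wreath_ext h)"
  by (simp_all add: kx1_def kx2_def kx3_def)

lemma kx2_mult_kx1: "kx2 \<otimes>\<^bsub>wreath_ext h\<^esub> kx1 = ka"
  and kx1_mult_kx3: "kx1 \<otimes>\<^bsub>wreath_ext h\<^esub> kx3 = kb"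
  by (simp_all add: kx1_def kx2_def kx3_def ka_def kb_def affine_def zero_prod_def)

lemma kx_squares:
  "kx1 \<otimes>\<^bsub>wreath_ext h\<^esub> kx1 = \<one>\<^bsub>wreath_ext h\<^esub>"
  "kx2 \<otimes>\<^bsub>wreath_ext h\<^esub> kx2 = \<one>\<^bsub>wreath_ext h\<^esub>"
  "kx3 \<otimes>\<^bsub>wreath_ext h\<^esub> kx3 = \<one>\<^bsub>wreath_ext h\<^esub>"
proof -
  have "transport (-1) (1, 0) dipole = (\<lambda>x. - dipole x)"
    by (auto simp: transport_def dipole_def fun_eq_iff)
  then show "kx2 \<otimes>\<^bsub>wreath_ext h\<^esub> kx2 = \<one>\<^bsub>wreath_ext h\<^esub>"
    by (simp add: kx2_def wreath_ext_one affine_def omega_uminus_right zero_prod_def)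
qed (simp_all add: kx1_def kx3_def wreath_ext_one affine_def zero_prod_def)

section \<open>Minimality of the two presentations\<close>

lemma metab_relator_separated_by_wreath_ext:
  assumes "group_hom G (wreath_ext h) \<phi>" "y \<in> carrier G" "z \<in> carrier G" "\<phi> y = ka" "\<phi> z = kb"
    and "p \<in> pos_pairs" "h \<in> pos_pairs"
  shows "\<phi> (metab_relator G y z (fst p) (snd p)) = \<one>\<^bsub>wreath_ext h\<^esub> \<longleftrightarrow> p \<noteq> h"
  using assms by (simp add: group_hom.metab_relator_hom metab_relator_ka_kb_eq_one)

lemma rel1_eq_metab_relator:
  "rel1 p = metab_relator (free_group {2, 3}) (fgen 2) (fgen 3) (fst p) (snd p)"
  by (simp add: rel1_def metab_relator_def Let_def)

lemma rel2_Inl: "rel2 (Inl k) = fgen k \<otimes>\<^bsub>free_group {1, 2, 3}\<^esub> fgen k"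
  by (simp add: rel2_def Let_def)

lemma rel2_Inr:
  "rel2 (Inr p) = metab_relator (free_group {1, 2, 3})
     (fgen 2 \<otimes>\<^bsub>free_group {1, 2, 3}\<^esub> fgen 1) (fgen 1 \<otimes>\<^bsub>free_group {1, 2, 3}\<^esub> fgen 3) (fst p) (snd p)"
  by (simp add: rel2_def metab_relator_def Let_def case_prod_beta)

lemma minimal_relators_rel1: "minimal_relators (free_group {2::nat, 3}) pos_pairs rel1"
  unfolding minimal_relators_def
proof
  fix h
  assume h: "h \<in> pos_pairs"
  interpret F: group "free_group {2::nat, 3}"
    by (rule group_free_group)
  interpret K: group "wreath_ext h"
    by (rule group_wreath_ext)
  let ?f = "\<lambda>j::nat. if j = 2 then ka else kb"
  have f: "?f ` {2, 3} \<subseteq> carrier (wreath_ext h)"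
    by auto
  note \<phi> = K.group_hom_free_group_lift[OF f]
  have gens: "fgen 2 \<in> carrier (free_group {2::nat, 3})" "fgen 3 \<in> carrier (free_group {2::nat, 3})"
    by (simp_all add: fgen_closed)
  have metab: "free_group_lift (wreath_ext h) ?f (rel1 p) = \<one>\<^bsub>wreath_ext h\<^esub> \<longleftrightarrow> p \<noteq> h"
    if "p \<in> pos_pairs" for p
    using that h gens
    by (simp add: rel1_eq_metab_relator metab_relator_separated_by_wreath_ext[OF \<phi>] K.free_group_lift_fgen[OF f])
  show "rel1 h \<notin> normal_closure (free_group {2, 3}) (rel1 ` (pos_pairs - {h}))"
  proof (rule relator_not_in_normal_closure[OF \<phi>])
    show "rel1 ` pos_pairs \<subseteq> carrier (free_group {2, 3})"
      using gens by (auto simp: rel1_eq_metab_relator F.metab_relator_closed)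
  qed (use h metab in auto)
qed

text \<open>Keeps the generator \<open>x\<^sub>1\<close> written as \<open>fgen 1\<close>, as in \<open>rel2\<close> and \<open>rel2_index\<close>.\<close>

declare One_nat_def [simp del]

abbreviation F3 :: "nat fword monoid" where
  "F3 \<equiv> free_group {1, 2, 3}"

lemma rel2_closed: "rel2 ` rel2_index \<subseteq> carrier F3"
proof -
  interpret F: group F3
    by (rule group_free_group)
  have "rel2 i \<in> carrier F3" if "i \<in> rel2_index" for i
  proof (cases i)
    case (Inl k)
    with that have "fgen k \<in> carrier F3"
      by (auto simp: rel2_index_def intro: fgen_closed)
    then show ?thesis
      by (simp add: Inl rel2_Inl)
  next
    case (Inr p)
    then show ?thesis
      by (simp add: rel2_Inr fgen_closed F.metab_relator_closed)
  qed
  then show ?thesis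
    by blast
qed

lemma rel2_square_not_redundant:
  assumes k: "k \<in> {1, 2, 3}"
  shows "rel2 (Inl k) \<notin> normal_closure F3 (rel2 ` (rel2_index - {Inl k}))"
proof -
  interpret F: group F3
    by (rule group_free_group)
  interpret Z: comm_group integer_group
    by (rule abelian_integer_group)
  define f where "f = (\<lambda>j::nat. if j = k then 1 else 0 :: int)"
  have f_eq: "f j = (if j = k then 1 else 0)" for j
    by (simp add: f_def)
  have f: "f ` {1, 2, 3} \<subseteq> carrier integer_group"
    by simp
  note \<phi> = Z.group_hom_free_group_lift[OF f]
  have square: "free_group_lift integer_group f (rel2 (Inl j)) = (if j = k then 2 else 0)"
    if j: "j \<in> {1, 2, 3}" for j
  proof -
    have "fgen j \<in> carrier F3"
      using j by (rule fgen_closed)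
    then show ?thesis
      by (simp add: rel2_Inl group_hom.hom_mult[OF \<phi>] Z.free_group_lift_fgen[OF f j] f_eq)
  qed
  have metab: "free_group_lift integer_group f (rel2 (Inr p)) = 0" for p
    by (simp add: rel2_Inr fgen_closed group_hom.metab_relator_hom[OF \<phi>] Z.metab_relator_eq_one)
  show ?thesis
  proof (rule relator_not_in_normal_closure[OF \<phi> rel2_closed])
    show "free_group_lift integer_group f (rel2 (Inl k)) \<noteq> \<one>\<^bsub>integer_group\<^esub>"
      using square[OF k] by simp
  next
    fix i
    assume "i \<in> rel2_index" "i \<noteq> Inl k"
    then show "free_group_lift integer_group f (rel2 i) = \<one>\<^bsub>integer_group\<^esub>"
      using square metab by (auto simp: rel2_index_def)
  qed
qed

lemma rel2_metab_not_redundant: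
  assumes h: "h \<in> pos_pairs"
  shows "rel2 (Inr h) \<notin> normal_closure F3 (rel2 ` (rel2_index - {Inr h}))"
proof -
  interpret F: group F3
    by (rule group_free_group)
  interpret K: group "wreath_ext h"
    by (rule group_wreath_ext)
  define f where "f = (\<lambda>j::nat. if j = 1 then kx1 else if j = 2 then kx2 else kx3)"
  have f: "f ` {1, 2, 3} \<subseteq> carrier (wreath_ext h)"
    by (auto simp: f_def)
  note \<phi> = K.group_hom_free_group_lift[OF f]
  have "free_group_lift (wreath_ext h) f (fgen j) = f j" if "j \<in> {1, 2, 3}" for j
    using that by (rule K.free_group_lift_fgen[OF f])
  then have gen: "free_group_lift (wreath_ext h) f (fgen 1) = kx1"
    "free_group_lift (wreath_ext h) f (fgen 2) = kx2"
    "free_group_lift (wreath_ext h) f (fgen 3) = kx3"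
    by (simp_all add: f_def)
  have gens: "fgen 1 \<in> carrier F3" "fgen 2 \<in> carrier F3" "fgen 3 \<in> carrier F3"
    by (simp_all add: fgen_closed)
  have square: "free_group_lift (wreath_ext h) f (rel2 (Inl j)) = \<one>\<^bsub>wreath_ext h\<^esub>"
    if "j \<in> {1, 2, 3}" for j
    using that gens gen by (auto simp: rel2_Inl group_hom.hom_mult[OF \<phi>] kx_squares)
  have "free_group_lift (wreath_ext h) f (fgen 2 \<otimes>\<^bsub>F3\<^esub> fgen 1) = ka"
    "free_group_lift (wreath_ext h) f (fgen 1 \<otimes>\<^bsub>F3\<^esub> fgen 3) = kb"
    using gens gen by (simp_all add: group_hom.hom_mult[OF \<phi>] kx2_mult_kx1 kx1_mult_kx3)
  then have metab: "free_group_lift (wreath_ext h) f (rel2 (Inr p)) = \<one>\<^bsub>wreath_ext h\<^esub> \<longleftrightarrow> p \<noteq> h"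
    if "p \<in> pos_pairs" for p
    using that h gens by (simp add: rel2_Inr metab_relator_separated_by_wreath_ext[OF \<phi>])
  show ?thesis
  proof (rule relator_not_in_normal_closure[OF \<phi> rel2_closed])
  qed (use h square metab in \<open>auto simp: rel2_index_def\<close>)
qed

lemma minimal_relators_rel2: "minimal_relators F3 rel2_index rel2"
  unfolding minimal_relators_def
proof
  fix i
  assume "i \<in> rel2_index"
  then consider k where "k \<in> {1, 2, 3}" "i = Inl k" | p where "p \<in> pos_pairs" "i = Inr p"
    unfolding rel2_index_def by blast
  then show "rel2 i \<notin> normal_closure F3 (rel2 ` (rel2_index - {i}))"
    by cases (simp_all add: rel2_square_not_redundant rel2_metab_not_redundant)
qed

theorem theorem5p4:
  shows "minimal_relators (free_group {2::nat, 3}) pos_pairs rel1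
       \<and> minimal_relators (free_group {1::nat, 2, 3}) rel2_index rel2"
  using minimal_relators_rel1 minimal_relators_rel2 by blast

end
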